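(* Let $G$ be a connected bipartite graph whose bipartition classes have sizes $a\ge1$ and $b\ge1$, let $K$ be a finite field with $q$ elements, and let $X$ be the projective algebraic toric set parameterized by the edges of $G$. Let $X_1$, $X_2$, $X_3$ be the projective tori in $\mathbb{P}^{a-1}$, $\mathbb{P}^{b-1}$, $\mathbb{P}^{a+b-2}$ respectively. Then for every $d\ge1$, $$\delta_{X_1}(d)\,\delta_{X_2}(d)\le\delta_X(d)\le\delta_{X_3}(d).$$
   Context: For $Y$ a subset of the projective torus $\mathbb{T}^{N-1}=\{(y_1:\dots:y_N): y_i\neq0\}\subseteq\mathbb{P}^{N-1}$ over $K$, with $Y=\{P_1,\dots,P_m\}$, the code $C_Y(d)\subseteq K^m$ is the image of the space of degree-$d$ forms in $K[t_1,\dots,t_N]$ under $f\mapsto\big(f(P_1)/t_1^d(P_1),\dots,f(P_m)/t_1^d(P_m)\big)$, and $\delta_Y(d)$ is its minimum distance, i.e. the minimum number of nonzero coordinates of a nonzero vector of $C_Y(d)$. For a graph $G$ with vertices $\{1,\dots,n\}$ and edges $e_1,\dots,e_s$, the projective algebraic toric set parameterized by the edges of $G$ is the image $X\subseteq\mathbb{P}^{s-1}$ of $\mathbb{T}^{n-1}$ under the map whose $k$-th coordinate is $x_ix_j$ when $e_k=\{i,j\}$. *)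

theory Defs
  imports Main
begin

text \<open>Vectors in K^N are functions nat => K vanishing outside {0..<N};
 coordinate t_1 is index 0.\<close>

definition torus_vecs :: "nat \<Rightarrow> (nat \<Rightarrow> 'a::field) set" where
  "torus_vecs N = {y. (\<forall>i<N. y i \<noteq> 0) \<and> (\<forall>i\<ge>N. y i = 0)}"

definition proj_pt :: "(nat \<Rightarrow> 'a::field) \<Rightarrow> (nat \<Rightarrow> 'a) set" where
  "proj_pt y = {(\<lambda>i. c * y i) | c. c \<noteq> 0}"

text \<open>The projective torus T^{N-1} inside P^{N-1}.\<close>
definition proj_torus :: "nat \<Rightarrow> (nat \<Rightarrow> 'a::field) set set" where
  "proj_torus N = proj_pt ` torus_vecs N"

definition mono_exps :: "nat \<Rightarrow> nat \<Rightarrow> (nat \<Rightarrow> nat) set" where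
  "mono_exps N d = {\<alpha>. (\<forall>i\<ge>N. \<alpha> i = 0) \<and> (\<Sum>i<N. \<alpha> i) = d}"

definition eval_form :: "nat \<Rightarrow> nat \<Rightarrow> ((nat \<Rightarrow> nat) \<Rightarrow> 'a::field) \<Rightarrow> (nat \<Rightarrow> 'a) \<Rightarrow> 'a" where
  "eval_form N d c y = (\<Sum>\<alpha>\<in>mono_exps N d. c \<alpha> * (\<Prod>i<N. y i ^ \<alpha> i))"

text \<open>Coordinate of the codeword of f at the projective point P: f(P)/t_1^d(P).\<close>
definition code_val :: "nat \<Rightarrow> nat \<Rightarrow> ((nat \<Rightarrow> nat) \<Rightarrow> 'a::field) \<Rightarrow> (nat \<Rightarrow> 'a) set \<Rightarrow> 'a" where
  "code_val N d c P = (let y = (SOME y. y \<in> P) in eval_form N d c y / (y 0) ^ d)"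

definition min_dist :: "nat \<Rightarrow> nat \<Rightarrow> (nat \<Rightarrow> 'a::field) set set \<Rightarrow> nat" where
  "min_dist N d Y = Min {card {P\<in>Y. code_val N d c P \<noteq> 0} | c. \<exists>P\<in>Y. code_val N d c P \<noteq> 0}"

definition edge_vec :: "nat set list \<Rightarrow> (nat \<Rightarrow> 'a::field) \<Rightarrow> (nat \<Rightarrow> 'a)" where
  "edge_vec E x = (\<lambda>k. if k < length E then (\<Prod>i\<in>E ! k. x i) else 0)"

definition edge_toric_set :: "nat \<Rightarrow> nat set list \<Rightarrow> (nat \<Rightarrow> 'a::field) set set" where
  "edge_toric_set n E = (\<lambda>x. proj_pt (edge_vec E x)) ` torus_vecs n"

definition simple_graph :: "nat \<Rightarrow> nat set list \<Rightarrow> bool" where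
  "simple_graph n E \<longleftrightarrow> distinct E \<and>
     (\<forall>e\<in>set E. \<exists>i j. e = {i, j} \<and> i \<noteq> j \<and> i < n \<and> j < n)"

definition graph_connected :: "nat \<Rightarrow> nat set list \<Rightarrow> bool" where
  "graph_connected n E \<longleftrightarrow>
     (\<forall>u<n. \<forall>v<n. (\<lambda>x y. {x, y} \<in> set E)\<^sup>*\<^sup>* u v)"

definition bipartition :: "nat \<Rightarrow> nat set list \<Rightarrow> nat set \<Rightarrow> bool" where
  "bipartition n E A \<longleftrightarrow> A \<subseteq> {0..<n} \<and>
     (\<forall>e\<in>set E. card (e \<inter> A) = 1)"

end

theory Submission
  imports Defs "HOL-Library.FuncSet"
begin

text \<open>Split a vertex vector \<open>x \<in> T\<^sup>n\<^sup>-\<^sup>1\<close> as \<open>(u, v)\<close>, with \<open>u\<close> on the class \<open>A\<close> and \<open>v\<close> on the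
  other class. A form \<open>f\<close> of degree \<open>d\<close> in the edge coordinates becomes a polynomial \<open>G(u, v)\<close>
  that is a form of degree \<open>d\<close> in \<open>u\<close> and in \<open>v\<close> separately, so counting on the affine tori
  gives at least \<open>(q-1) \<delta>\<^sub>X\<^sub>1(d) \<cdot> (q-1) \<delta>\<^sub>X\<^sub>2(d)\<close> pairs with \<open>G(u, v) \<noteq> 0\<close>. Since the graph is
  connected and bipartite, the pairs over one point of \<open>X\<close> differ only by scaling \<open>u\<close> and \<open>v\<close>,
  so there are at most \<open>(q-1)\<^sup>2\<close> of them; this gives the lower bound.
  For the upper bound, the \<open>n - 1\<close> coordinates belonging to the edges of a spanning tree map \<open>X\<close>
  bijectively onto \<open>X\<^sub>3\<close>, and every codeword of \<open>C\<^sub>X\<^sub>3(d)\<close> pulls back to a codeword of \<open>C\<^sub>X(d)\<close>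
  with the same support.\<close>

lemma finite_funs_const_outside:
  assumes "finite B"
  shows "finite {f::nat \<Rightarrow> 'b. (\<forall>i<N. f i \<in> B) \<and> (\<forall>i\<ge>N. f i = z)}"
proof -
  have "{f::nat \<Rightarrow> 'b. (\<forall>i<N. f i \<in> B) \<and> (\<forall>i\<ge>N. f i = z)}
     \<subseteq> (\<lambda>g i. if i<N then g i else z) ` PiE {..<N} (\<lambda>_. B)"
  proof
    fix f assume f: "f \<in> {f::nat \<Rightarrow> 'b. (\<forall>i<N. f i \<in> B) \<and> (\<forall>i\<ge>N. f i = z)}"
    then have "f = (\<lambda>i. if i<N then (restrict f {..<N}) i else z)" by (auto simp: not_less)
    moreover have "restrict f {..<N} \<in> PiE {..<N} (\<lambda>_. B)" using f by auto
    ultimately show "f \<in> (\<lambda>g i. if i<N then g i else z) ` PiE {..<N} (\<lambda>_. B)" by blast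
  qed
  then show ?thesis by (rule finite_subset) (intro finite_imageI finite_PiE; simp add: assms)
qed

lemma finite_mono_exps: "finite (mono_exps N d)"
proof -
  have "mono_exps N d \<subseteq> {f. (\<forall>i<N. f i \<in> {0..d}) \<and> (\<forall>i\<ge>N. f i = 0)}"
  proof
    fix f assume f: "f \<in> mono_exps N d"
    have "f i \<le> d" if "i < N" for i
    proof -
      have "f i \<le> (\<Sum>i<N. f i)" using that by (intro member_le_sum) auto
      then show ?thesis using f by (simp add: mono_exps_def)
    qed
    then show "f \<in> {f. (\<forall>i<N. f i \<in> {0..d}) \<and> (\<forall>i\<ge>N. f i = 0)}" using f by (auto simp: mono_exps_def)
  qed
  then show ?thesis by (rule finite_subset) (rule finite_funs_const_outside, simp)
qed

lemma finite_torus_vecs: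
  assumes "finite (UNIV :: 'a::field set)"
  shows "finite (torus_vecs N :: (nat \<Rightarrow> 'a) set)"
proof -
  have "torus_vecs N \<subseteq> {f::nat\<Rightarrow>'a. (\<forall>i<N. f i \<in> UNIV) \<and> (\<forall>i\<ge>N. f i = 0)}"
    by (auto simp: torus_vecs_def)
  then show ?thesis by (rule finite_subset) (rule finite_funs_const_outside, rule assms)
qed

lemma card_torus_vecs:
  assumes "finite (UNIV::'a::field set)"
  shows "card (torus_vecs N :: (nat \<Rightarrow> 'a) set) = card {k::'a. k \<noteq> 0} ^ N"
proof -
  let ?K = "{k::'a. k \<noteq> 0}"
  let ?e = "\<lambda>g::nat\<Rightarrow>'a. \<lambda>i. if i < N then g i else 0"
  have eq: "torus_vecs N = ?e ` PiE {..<N} (\<lambda>_. ?K)"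
  proof
    show "torus_vecs N \<subseteq> ?e ` PiE {..<N} (\<lambda>_. ?K)"
    proof
      fix y :: "nat \<Rightarrow> 'a" assume y: "y \<in> torus_vecs N"
      then have "y = ?e (restrict y {..<N})" by (auto simp: torus_vecs_def not_less)
      moreover have "restrict y {..<N} \<in> PiE {..<N} (\<lambda>_. ?K)" using y
        by (auto simp: torus_vecs_def)
      ultimately show "y \<in> ?e ` PiE {..<N} (\<lambda>_. ?K)" by blast
    qed
    show "?e ` PiE {..<N} (\<lambda>_. ?K) \<subseteq> torus_vecs N"
      by (auto simp: torus_vecs_def PiE_def Pi_def)
  qed
  have "inj_on ?e (PiE {..<N} (\<lambda>_. ?K))"
  proof (rule inj_onI)
    fix g h assume g: "g \<in> PiE {..<N} (\<lambda>_. ?K)" and h: "h \<in> PiE {..<N} (\<lambda>_. ?K)"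
      and e: "?e g = ?e h"
    show "g = h"
    proof (rule PiE_ext[OF g h])
      fix i assume "i \<in> {..<N}"
      then show "g i = h i" using fun_cong[OF e, of i] by simp
    qed
  qed
  then show ?thesis unfolding eq by (simp add: card_image card_PiE)
qed

lemma card_nonzero_pos:
  assumes "finite (UNIV::'a::field set)"
  shows "0 < card {k::'a. k \<noteq> 0}"
proof -
  have "{k::'a. k \<noteq> 0} \<noteq> {}" using one_neq_zero by blast
  then show ?thesis using assms by (simp add: card_gt_0_iff)
qed

section \<open>Forms of degree \<open>d\<close>\<close>

definition forms :: "nat \<Rightarrow> nat \<Rightarrow> ((nat \<Rightarrow> 'a::field) \<Rightarrow> 'a) set" where
  "forms N d = {g. \<exists>c. \<forall>y. g y = eval_form N d c y}"

lemma monomial_in_forms: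
  assumes "\<alpha> \<in> mono_exps N d"
  shows "(\<lambda>y. \<Prod>i<N. y i ^ \<alpha> i) \<in> forms N d"
proof -
  let ?c = "\<lambda>\<beta>. if \<beta> = \<alpha> then 1 else 0"
  have "eval_form N d ?c y = (\<Prod>i<N. y i ^ \<alpha> i)" for y
  proof -
    have "eval_form N d ?c y = (\<Sum>\<beta>\<in>mono_exps N d. if \<beta> = \<alpha> then (\<Prod>i<N. y i ^ \<beta> i) else 0)"
      unfolding eval_form_def by (intro sum.cong) auto
    also have "\<dots> = (\<Prod>i<N. y i ^ \<alpha> i)" using assms finite_mono_exps by (simp add: sum.delta)
    finally show ?thesis .
  qed
  then have "\<forall>y. (\<Prod>i<N. y i ^ \<alpha> i) = eval_form N d ?c y" by metis
  then show ?thesis unfolding forms_def by blast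
qed

lemma add_in_forms:
  assumes "f \<in> forms N d" "g \<in> forms N d"
  shows "(\<lambda>y. f y + g y) \<in> forms N d"
proof -
  obtain c1 c2 where "\<forall>y. f y = eval_form N d c1 y" "\<forall>y. g y = eval_form N d c2 y"
    using assms unfolding forms_def by blast
  then have "\<forall>y. f y + g y = eval_form N d (\<lambda>\<beta>. c1 \<beta> + c2 \<beta>) y"
    unfolding eval_form_def by (simp add: sum.distrib distrib_right)
  then show ?thesis unfolding forms_def by blast
qed

lemma scale_in_forms:
  assumes "f \<in> forms N d"
  shows "(\<lambda>y. k * f y) \<in> forms N d"
proof -
  obtain c where "\<forall>y. f y = eval_form N d c y"
    using assms unfolding forms_def by blast
  then have "\<forall>y. k * f y = eval_form N d (\<lambda>\<beta>. k * c \<beta>) y"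
    unfolding eval_form_def by (simp add: sum_distrib_left mult.assoc)
  then show ?thesis unfolding forms_def by blast
qed

lemma sum_in_forms:
  "finite I \<Longrightarrow> (\<And>i. i \<in> I \<Longrightarrow> g i \<in> forms N d) \<Longrightarrow> (\<lambda>y. \<Sum>i\<in>I. g i y) \<in> forms N d"
proof (induction I rule: finite_induct)
  case empty
  show ?case unfolding forms_def by (auto intro!: exI[of _ "\<lambda>_. 0"] simp: eval_form_def)
next
  case (insert x F) then show ?case by (simp add: add_in_forms)
qed

lemma eval_form_homogeneous: "eval_form N d c (\<lambda>i. k * y i) = k ^ d * eval_form N d c y"
proof -
  have "(\<Prod>i<N. (k * y i) ^ \<alpha> i) = k ^ d * (\<Prod>i<N. y i ^ \<alpha> i)" if "\<alpha> \<in> mono_exps N d" for \<alpha>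
  proof -
    have "(\<Prod>i<N. (k * y i) ^ \<alpha> i) = (\<Prod>i<N. k ^ \<alpha> i) * (\<Prod>i<N. y i ^ \<alpha> i)"
      by (simp add: power_mult_distrib prod.distrib)
    also have "(\<Prod>i<N. k ^ \<alpha> i) = k ^ (\<Sum>i<N. \<alpha> i)" by (simp add: power_sum)
    also have "(\<Sum>i<N. \<alpha> i) = d" using that unfolding mono_exps_def by simp
    finally show ?thesis .
  qed
  then show ?thesis unfolding eval_form_def sum_distrib_left
    by (intro sum.cong) (auto simp: mult.left_commute)
qed

lemma eval_form_cong:
  assumes "\<And>i. i < N \<Longrightarrow> y i = y' i"
  shows "eval_form N d c y = eval_form N d c y'"
  unfolding eval_form_def using assms by (intro sum.cong refl arg_cong2[where f="(*)"] prod.cong) auto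

text \<open>Substituting variables \<open>t\<^sub>k \<mapsto> t\<^sub>p\<^sub>(\<^sub>k\<^sub>)\<close> in a monomial keeps it a monomial of the same degree:
  its exponent at \<open>i\<close> is the total exponent of the fibre \<open>p\<^sup>-\<^sup>1(i)\<close>.\<close>
lemma monomial_reindex_in_forms:
  assumes p: "\<And>k. k < M \<Longrightarrow> p k < N" and \<alpha>: "\<alpha> \<in> mono_exps M d"
  shows "(\<lambda>u. \<Prod>k<M. u (p k) ^ \<alpha> k) \<in> forms N d"
proof -
  define \<beta> where "\<beta> i = (\<Sum>k\<in>{k. k<M \<and> p k = i}. \<alpha> k)" for i
  have fibre: "{x \<in> {..<M}. p x = i} = {k. k<M \<and> p k = i}" for i by auto
  have \<beta>: "\<beta> \<in> mono_exps N d"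
  proof -
    have "\<beta> i = 0" if "i \<ge> N" for i
    proof -
      have empty: "{k. k<M \<and> p k = i} = {}" using p that by fastforce
      show ?thesis unfolding \<beta>_def empty by simp
    qed
    moreover have "(\<Sum>i<N. \<beta> i) = (\<Sum>k<M. \<alpha> k)"
      unfolding \<beta>_def fibre[symmetric] by (rule sum.group) (use p in auto)
    ultimately show ?thesis using \<alpha> by (simp add: mono_exps_def)
  qed
  have "(\<Prod>k<M. u (p k) ^ \<alpha> k) = (\<Prod>i<N. u i ^ \<beta> i)" for u
  proof -
    have "(\<Prod>k<M. u (p k) ^ \<alpha> k) = (\<Prod>i<N. \<Prod>k\<in>{k. k<M \<and> p k = i}. u (p k) ^ \<alpha> k)"
      unfolding fibre[symmetric] by (rule prod.group[symmetric]) (use p in auto)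
    also have "\<dots> = (\<Prod>i<N. \<Prod>k\<in>{k. k<M \<and> p k = i}. u i ^ \<alpha> k)"
      by (intro prod.cong) auto
    also have "\<dots> = (\<Prod>i<N. u i ^ \<beta> i)" by (simp add: \<beta>_def power_sum)
    finally show ?thesis .
  qed
  then have eq: "(\<lambda>u. \<Prod>k<M. u (p k) ^ \<alpha> k) = (\<lambda>y. \<Prod>i<N. y i ^ \<beta> i)" by (rule ext)
  show ?thesis unfolding eq by (rule monomial_in_forms[OF \<beta>])
qed

lemma eval_form_reindex_in_forms:
  assumes "\<And>k. k < M \<Longrightarrow> p k < N"
  shows "(\<lambda>u. eval_form M d c (\<lambda>k. u (p k))) \<in> forms N d"
  unfolding eval_form_def
  by (intro sum_in_forms finite_mono_exps scale_in_forms monomial_reindex_in_forms assms)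

section \<open>Projective tori and their codes\<close>

lemma proj_pt_iff: "z \<in> proj_pt y \<longleftrightarrow> (\<exists>c. c \<noteq> 0 \<and> z = (\<lambda>i. c * y i))"
  unfolding proj_pt_def by blast

lemma proj_pt_self: "y \<in> proj_pt y"
  unfolding proj_pt_iff by (intro exI[of _ 1]) simp

lemma proj_pt_scale:
  assumes "c \<noteq> 0"
  shows "proj_pt (\<lambda>i. c * y i) = proj_pt y"
proof (rule set_eqI)
  fix z
  show "z \<in> proj_pt (\<lambda>i. c * y i) \<longleftrightarrow> z \<in> proj_pt y"
  proof
    assume "z \<in> proj_pt (\<lambda>i. c * y i)"
    then obtain k where k: "k \<noteq> 0" "z = (\<lambda>i. (k * c) * y i)"
      by (auto simp: proj_pt_iff mult.assoc)
    with assms show "z \<in> proj_pt y" unfolding proj_pt_iff by (intro exI[of _ "k * c"]) simp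
  next
    assume "z \<in> proj_pt y"
    then obtain k where k: "k \<noteq> 0" "z = (\<lambda>i. (k / c) * (c * y i))"
      using assms by (auto simp: proj_pt_iff)
    with assms show "z \<in> proj_pt (\<lambda>i. c * y i)" unfolding proj_pt_iff by (intro exI[of _ "k / c"]) simp
  qed
qed

lemma proj_pt_eq_of_mem:
  assumes "z \<in> proj_pt y"
  shows "proj_pt z = proj_pt y"
  using assms proj_pt_scale by (auto simp: proj_pt_iff)

lemma proj_pt_eq_imp_scaled:
  assumes "proj_pt y = proj_pt y'"
  shows "\<exists>c. c \<noteq> 0 \<and> y = (\<lambda>i. c * y' i)"
  using proj_pt_self[of y] unfolding assms proj_pt_iff .

lemma card_proj_pt:
  fixes y :: "nat \<Rightarrow> 'a::field"
  assumes "y j \<noteq> 0"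
  shows "card (proj_pt y) = card {k::'a. k \<noteq> 0}"
proof -
  have "proj_pt y = (\<lambda>c i. c * y i) ` {k. k \<noteq> 0}" by (auto simp: proj_pt_def)
  moreover have "inj_on (\<lambda>c i. c * y i) {k. k \<noteq> 0}"
  proof (rule inj_onI)
    fix c c' assume "(\<lambda>i. c * y i) = (\<lambda>i. c' * y i)"
    then have "c * y j = c' * y j" by meson
    then show "c = c'" using assms by simp
  qed
  ultimately show ?thesis by (simp add: card_image)
qed

lemma torus_vecs_scale: "y \<in> torus_vecs N \<Longrightarrow> c \<noteq> 0 \<Longrightarrow> (\<lambda>i. c * y i) \<in> torus_vecs N"
  by (simp add: torus_vecs_def)

lemma proj_pt_subset_torus_vecs: "y \<in> torus_vecs N \<Longrightarrow> proj_pt y \<subseteq> torus_vecs N"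
  by (auto simp: proj_pt_iff torus_vecs_def)

lemma finite_proj_torus:
  "finite (UNIV :: 'a::field set) \<Longrightarrow> finite (proj_torus N :: (nat \<Rightarrow> 'a) set set)"
  unfolding proj_torus_def using finite_torus_vecs by blast

text \<open>By homogeneity the codeword coordinate does not depend on the representative chosen by \<open>SOME\<close>.\<close>
lemma code_val_proj_pt_nonzero_iff:
  assumes "y 0 \<noteq> 0"
  shows "code_val N d c (proj_pt y) \<noteq> 0 \<longleftrightarrow> eval_form N d c y \<noteq> 0"
proof -
  define y' where "y' = (SOME y'. y' \<in> proj_pt y)"
  have "y' \<in> proj_pt y" unfolding y'_def by (rule someI[where x=y]) (rule proj_pt_self)
  then obtain k where k: "k \<noteq> 0" "y' = (\<lambda>i. k * y i)" by (auto simp: proj_pt_iff)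
  have "code_val N d c (proj_pt y) = eval_form N d c y' / (y' 0) ^ d"
    unfolding code_val_def y'_def Let_def by simp
  also have "\<dots> = k ^ d * eval_form N d c y / (k * y 0) ^ d"
    using k by (simp add: eval_form_homogeneous)
  finally show ?thesis using k assms by simp
qed

lemma card_Union_proj_torus_subset:
  assumes fin: "finite (UNIV::'a::field set)" and S: "S \<subseteq> (proj_torus N :: (nat \<Rightarrow> 'a) set set)"
    and N: "N \<ge> 1"
  shows "card (\<Union>S) = card {k::'a. k \<noteq> 0} * card S"
proof -
  have fS: "finite S" using S finite_proj_torus[OF fin] finite_subset by blast
  have "\<Union>S \<subseteq> torus_vecs N" using S proj_pt_subset_torus_vecs by (auto simp: proj_torus_def)
  then have fU: "finite (\<Union>S)" using finite_torus_vecs[OF fin] finite_subset by blast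
  have "card {k::'a. k \<noteq> 0} * card S = card (\<Union>S)"
  proof (rule card_partition[OF fS fU])
    fix P assume "P \<in> S"
    then obtain y where "y \<in> torus_vecs N" "P = proj_pt y" using S by (auto simp: proj_torus_def)
    moreover then have "y 0 \<noteq> 0" using N by (simp add: torus_vecs_def)
    ultimately show "card P = card {k::'a. k \<noteq> 0}" using card_proj_pt by simp
  next
    fix P1 P2 assume P: "P1 \<in> S" "P2 \<in> S" "P1 \<noteq> P2"
    show "P1 \<inter> P2 = {}"
    proof (rule ccontr)
      assume "P1 \<inter> P2 \<noteq> {}"
      then obtain x where "x \<in> P1" "x \<in> P2" by blast
      moreover obtain y1 y2 where "P1 = proj_pt y1" "P2 = proj_pt y2"
        using P(1,2) S unfolding proj_torus_def by blast
      ultimately have "P1 = proj_pt x" "P2 = proj_pt x" using proj_pt_eq_of_mem by auto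
      then show False using P(3) by simp
    qed
  qed
  then show ?thesis by simp
qed

lemma card_proj_torus:
  assumes fin: "finite (UNIV::'a::field set)" and N: "N \<ge> 1"
  shows "card {k::'a. k \<noteq> 0} * card (proj_torus N :: (nat \<Rightarrow> 'a) set set) = card {k::'a. k \<noteq> 0} ^ N"
proof -
  have "\<Union>(proj_torus N :: (nat \<Rightarrow> 'a) set set) = torus_vecs N"
    using proj_pt_subset_torus_vecs proj_pt_self by (fastforce simp: proj_torus_def)
  then show ?thesis
    using card_Union_proj_torus_subset[OF fin _ N, of "proj_torus N"] card_torus_vecs[OF fin] by simp
qed

lemma card_torus_vecs_eval_form_nonzero:
  assumes fin: "finite (UNIV::'a::field set)" and N: "N \<ge> 1"
  shows "card {y \<in> (torus_vecs N :: (nat \<Rightarrow> 'a) set). eval_form N d c y \<noteq> 0}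
       = card {k::'a. k \<noteq> 0} * card {P \<in> proj_torus N. code_val N d c P \<noteq> 0}"
proof -
  have nz: "y 0 \<noteq> 0" if "y \<in> torus_vecs N" for y :: "nat \<Rightarrow> 'a"
    using that N by (simp add: torus_vecs_def)
  have "{y \<in> (torus_vecs N :: (nat \<Rightarrow> 'a) set). eval_form N d c y \<noteq> 0}
      = \<Union>{P \<in> proj_torus N. code_val N d c P \<noteq> 0}"
  proof
    show "{y \<in> torus_vecs N. eval_form N d c y \<noteq> 0} \<subseteq> \<Union>{P \<in> proj_torus N. code_val N d c P \<noteq> 0}"
    proof
      fix y :: "nat \<Rightarrow> 'a" assume y: "y \<in> {y \<in> torus_vecs N. eval_form N d c y \<noteq> 0}"
      then have "code_val N d c (proj_pt y) \<noteq> 0" using code_val_proj_pt_nonzero_iff nz by blast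
      moreover have "proj_pt y \<in> proj_torus N" using y by (simp add: proj_torus_def)
      ultimately show "y \<in> \<Union>{P \<in> proj_torus N. code_val N d c P \<noteq> 0}" using proj_pt_self by blast
    qed
    show "\<Union>{P \<in> proj_torus N. code_val N d c P \<noteq> 0} \<subseteq> {y \<in> torus_vecs N. eval_form N d c y \<noteq> 0}"
    proof
      fix y :: "nat \<Rightarrow> 'a" assume "y \<in> \<Union>{P \<in> proj_torus N. code_val N d c P \<noteq> 0}"
      then obtain y' where y': "y' \<in> torus_vecs N" "y \<in> proj_pt y'" "code_val N d c (proj_pt y') \<noteq> 0"
        by (auto simp: proj_torus_def)
      then have "eval_form N d c y' \<noteq> 0" using code_val_proj_pt_nonzero_iff nz by blast
      moreover obtain k where "k \<noteq> 0" "y = (\<lambda>i. k * y' i)" using y' by (auto simp: proj_pt_iff)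
      ultimately show "y \<in> {y \<in> torus_vecs N. eval_form N d c y \<noteq> 0}"
        using y' by (simp add: torus_vecs_scale eval_form_homogeneous)
    qed
  qed
  then show ?thesis
    using card_Union_proj_torus_subset[OF fin _ N, of "{P \<in> proj_torus N. code_val N d c P \<noteq> 0}"] by simp
qed

definition weights :: "nat \<Rightarrow> nat \<Rightarrow> (nat \<Rightarrow> 'a::field) set set \<Rightarrow> nat set" where
  "weights N d Y = {card {P\<in>Y. code_val N d c P \<noteq> 0} | c. \<exists>P\<in>Y. code_val N d c P \<noteq> 0}"

lemma min_dist_eq_Min_weights: "min_dist N d Y = Min (weights N d Y)"
  by (simp add: min_dist_def weights_def)

lemma finite_weights:
  assumes "finite Y"
  shows "finite (weights N d Y)"
proof -
  have "weights N d Y \<subseteq> {..card Y}" unfolding weights_def using assms by (auto intro: card_mono)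
  then show ?thesis using finite_subset by blast
qed

text \<open>The form \<open>t\<^sub>1\<^sup>d\<close> gives a nonzero codeword as soon as \<open>Y\<close> is nonempty.\<close>
lemma weights_nonempty:
  fixes Y :: "(nat \<Rightarrow> 'a::field) set set"
  assumes N: "N \<ge> 1" and ne: "Y \<noteq> {}" and rep: "\<And>P. P \<in> Y \<Longrightarrow> \<exists>y. P = proj_pt y \<and> y 0 \<noteq> 0"
  shows "weights N d Y \<noteq> {}"
proof -
  define \<alpha> where "\<alpha> = (\<lambda>i::nat. if i = 0 then d else 0)"
  have \<alpha>: "\<alpha> \<in> mono_exps N d" using N by (auto simp: mono_exps_def \<alpha>_def)
  obtain c where c: "\<forall>y. (\<Prod>i<N. y i ^ \<alpha> i) = eval_form N d c (y :: nat \<Rightarrow> 'a)"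
    using monomial_in_forms[OF \<alpha>] unfolding forms_def by blast
  have "(\<Prod>i<N. y i ^ \<alpha> i) = y 0 ^ d" for y :: "nat \<Rightarrow> 'a"
  proof -
    have "(\<Prod>i<N. y i ^ \<alpha> i) = (\<Prod>i<N. if i = 0 then y i ^ d else 1)"
      by (intro prod.cong) (auto simp: \<alpha>_def)
    also have "\<dots> = y 0 ^ d" using N by (simp add: prod.delta)
    finally show ?thesis .
  qed
  with c have ev: "eval_form N d c y = y 0 ^ d" for y :: "nat \<Rightarrow> 'a" by metis
  obtain P where P: "P \<in> Y" using ne by blast
  then obtain y where "P = proj_pt y" "y 0 \<noteq> 0" using rep by blast
  then have "code_val N d c P \<noteq> 0" using code_val_proj_pt_nonzero_iff[of y N d c] ev[of y] by simp
  then show ?thesis unfolding weights_def using P by blast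
qed

lemma proj_torus_weights_nonempty:
  assumes "N \<ge> 1"
  shows "weights N d (proj_torus N :: (nat \<Rightarrow> 'a::field) set set) \<noteq> {}"
proof (rule weights_nonempty[OF assms])
  have "(\<lambda>i::nat. if i < N then (1::'a) else 0) \<in> torus_vecs N" by (simp add: torus_vecs_def)
  then show "(proj_torus N :: (nat \<Rightarrow> 'a) set set) \<noteq> {}" by (auto simp: proj_torus_def)
  show "\<exists>y. P = proj_pt y \<and> y 0 \<noteq> 0" if "P \<in> (proj_torus N :: (nat \<Rightarrow> 'a) set set)" for P
    using that assms by (auto simp: proj_torus_def torus_vecs_def)
qed

lemma min_dist_le_weight:
  assumes "finite Y" "P \<in> Y" "code_val N d c P \<noteq> 0"
  shows "min_dist N d Y \<le> card {P\<in>Y. code_val N d c P \<noteq> 0}"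
  unfolding min_dist_eq_Min_weights
  by (rule Min_le[OF finite_weights[OF assms(1)]]) (use assms in \<open>auto simp: weights_def\<close>)

lemma min_dist_attained:
  assumes "finite Y" "weights N d Y \<noteq> {}"
  obtains c where "\<exists>P\<in>Y. code_val N d c P \<noteq> 0" "min_dist N d Y = card {P\<in>Y. code_val N d c P \<noteq> 0}"
proof -
  have "Min (weights N d Y) \<in> weights N d Y" by (rule Min_in[OF finite_weights[OF assms(1)] assms(2)])
  then show ?thesis using that unfolding min_dist_eq_Min_weights weights_def by auto
qed

lemma min_dist_ge:
  assumes "finite Y" "weights N d Y \<noteq> {}"
    and "\<And>c. \<exists>P\<in>Y. code_val N d c P \<noteq> 0 \<Longrightarrow> m \<le> card {P\<in>Y. code_val N d c P \<noteq> 0}"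
  shows "m \<le> min_dist N d Y"
proof -
  obtain c where "\<exists>P\<in>Y. code_val N d c P \<noteq> 0" "min_dist N d Y = card {P\<in>Y. code_val N d c P \<noteq> 0}"
    by (rule min_dist_attained[OF assms(1,2)])
  then show ?thesis using assms(3) by simp
qed

lemma min_dist_le_of_bij:
  assumes fin: "finite Y'" and bij: "bij_betw \<pi> Y Y'" and ne: "weights N' d Y' \<noteq> {}"
    and pull: "\<And>c'. \<exists>c. \<forall>P\<in>Y. code_val N d c P \<noteq> 0 \<longleftrightarrow> code_val N' d c' (\<pi> P) \<noteq> 0"
  shows "min_dist N d Y \<le> min_dist N' d Y'"
proof -
  obtain c' where c': "\<exists>P\<in>Y'. code_val N' d c' P \<noteq> 0"
    "min_dist N' d Y' = card {P\<in>Y'. code_val N' d c' P \<noteq> 0}"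
    using min_dist_attained[OF fin ne] by blast
  obtain c where c: "\<forall>P\<in>Y. code_val N d c P \<noteq> 0 \<longleftrightarrow> code_val N' d c' (\<pi> P) \<noteq> 0"
    using pull by blast
  have supp: "\<pi> ` {P\<in>Y. code_val N d c P \<noteq> 0} = {P\<in>Y'. code_val N' d c' P \<noteq> 0}"
    using c bij_betw_imp_surj_on[OF bij] bij_betwE[OF bij] by force
  have finY: "finite Y" using bij_betw_finite[OF bij] fin by simp
  have inj: "inj_on \<pi> {P\<in>Y. code_val N d c P \<noteq> 0}"
    using bij_betw_imp_inj_on[OF bij] by (rule inj_on_subset) auto
  obtain P where "P \<in> Y" "code_val N d c P \<noteq> 0" using c' supp by auto
  then have "min_dist N d Y \<le> card {P\<in>Y. code_val N d c P \<noteq> 0}"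
    by (rule min_dist_le_weight[OF finY])
  also have "\<dots> = min_dist N' d Y'" using card_image[OF inj] supp c'(2) by simp
  finally show ?thesis .
qed

lemma torus_weight_ge:
  fixes g :: "(nat \<Rightarrow> 'a::field) \<Rightarrow> 'a"
  assumes fin: "finite (UNIV::'a set)" and N: "N \<ge> 1" and g: "g \<in> forms N d"
    and y0: "y0 \<in> torus_vecs N" "g y0 \<noteq> 0"
  shows "card {k::'a. k \<noteq> 0} * min_dist N d (proj_torus N :: (nat \<Rightarrow> 'a) set set)
         \<le> card {y \<in> torus_vecs N. g y \<noteq> 0}"
proof -
  obtain c where c: "\<forall>y. g y = eval_form N d c y" using g unfolding forms_def by blast
  have "code_val N d c (proj_pt y0) \<noteq> 0"
    using y0 c N code_val_proj_pt_nonzero_iff[of y0] by (simp add: torus_vecs_def)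
  moreover have "proj_pt y0 \<in> proj_torus N" using y0 by (simp add: proj_torus_def)
  ultimately have "min_dist N d (proj_torus N :: (nat \<Rightarrow> 'a) set set)
      \<le> card {P \<in> proj_torus N. code_val N d c P \<noteq> 0}"
    using min_dist_le_weight finite_proj_torus[OF fin] by blast
  then have "card {k::'a. k \<noteq> 0} * min_dist N d (proj_torus N :: (nat \<Rightarrow> 'a) set set)
     \<le> card {k::'a. k \<noteq> 0} * card {P \<in> proj_torus N. code_val N d c P \<noteq> 0}" by simp
  also have "\<dots> = card {y \<in> torus_vecs N. eval_form N d c y \<noteq> 0}"
    using card_torus_vecs_eval_form_nonzero[OF fin N] by simp
  also have "{y \<in> torus_vecs N. eval_form N d c y \<noteq> 0} = {y \<in> torus_vecs N. g y \<noteq> 0}" using c by simp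
  finally show ?thesis .
qed

section \<open>Spanning edge sets\<close>

abbreviation reachable :: "'v set set \<Rightarrow> 'v \<Rightarrow> 'v \<Rightarrow> bool" where
  "reachable F \<equiv> (\<lambda>x y. {x, y} \<in> F)\<^sup>*\<^sup>*"

lemma rtranclp_leaves_set:
  assumes "R\<^sup>*\<^sup>* w v" "w \<in> S" "v \<notin> S"
  shows "\<exists>x y. R x y \<and> x \<in> S \<and> y \<notin> S"
  using assms by (induction rule: rtranclp_induct) blast+

text \<open>Growing a tree from \<open>w0\<close> one crossing edge at a time.\<close>
lemma connected_grow_edges:
  assumes simple: "simple_graph n E" and conn: "graph_connected n E" and w0: "w0 < n"
  shows "k < n \<Longrightarrow> \<exists>S F. w0 \<in> S \<and> S \<subseteq> {0..<n} \<and> card S = Suc k \<and> F \<subseteq> set E \<and> card F = k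
      \<and> (\<forall>e\<in>F. e \<subseteq> S) \<and> (\<forall>v\<in>S. reachable F w0 v)"
proof (induction k)
  case 0
  show ?case using w0 by (intro exI[of _ "{w0}"] exI[of _ "{}"]) auto
next
  case (Suc k)
  then obtain S F where IH: "w0 \<in> S" "S \<subseteq> {0..<n}" "card S = Suc k" "F \<subseteq> set E" "card F = k"
      "\<forall>e\<in>F. e \<subseteq> S" "\<forall>v\<in>S. reachable F w0 v"
    by auto
  have finS: "finite S" and finF: "finite F"
    using IH(2,4) finite_subset by auto
  have "S \<noteq> {0..<n}" using IH(3) Suc.prems by auto
  then obtain v where "v \<in> {0..<n} - S" using IH(2) by blast
  then have v: "v < n" "v \<notin> S" by auto
  have "reachable (set E) w0 v" using conn w0 v(1) unfolding graph_connected_def by blast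
  then obtain x y where xy: "{x,y} \<in> set E" "x \<in> S" "y \<notin> S"
    using rtranclp_leaves_set[of _ w0 v S] IH(1) v(2) by blast
  have yn: "y < n" using simple xy(1) unfolding simple_graph_def by (auto simp: doubleton_eq_iff)
  have new: "{x,y} \<notin> F" using IH(6) xy(3) by blast
  define F' where "F' = insert {x,y} F"
  have reach_old: "reachable F' w0 u" if "u \<in> S" for u
    using mono_rtranclp[of "\<lambda>x y. {x,y} \<in> F" "\<lambda>x y. {x,y} \<in> F'"] IH(7) that
    unfolding F'_def by blast
  have "reachable F' w0 y"
    using rtranclp.rtrancl_into_rtrancl[OF reach_old[OF xy(2)]] by (simp add: F'_def)
  then have "\<forall>u\<in>insert y S. reachable F' w0 u" using reach_old by blast
  moreover have "card (insert y S) = Suc (Suc k)" "card F' = Suc k"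
    using finS finF xy(3) new IH(3,5) by (simp_all add: F'_def)
  moreover have "insert y S \<subseteq> {0..<n}" "F' \<subseteq> set E" "\<forall>e\<in>F'. e \<subseteq> insert y S"
    using IH(2,4,6) yn xy unfolding F'_def by auto
  ultimately show ?case using IH(1) by blast
qed

lemma connected_spanning_edges:
  assumes "simple_graph n E" "graph_connected n E" "w0 < n"
  obtains F where "F \<subseteq> set E" "card F = n - 1" "\<forall>v<n. reachable F w0 v"
proof -
  obtain S F where SF: "S \<subseteq> {0..<n}" "card S = n" "F \<subseteq> set E" "card F = n - 1"
      "\<forall>v\<in>S. reachable F w0 v"
    using connected_grow_edges[OF assms, of "n - 1"] assms(3) by auto
  then have "S = {0..<n}" using card_subset_eq[of "{0..<n}" S] by simp
  then show ?thesis using SF that by auto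
qed

lemma edge_vec_in_torus_vecs:
  assumes x: "x \<in> torus_vecs n" and L: "\<And>e. e \<in> set L \<Longrightarrow> e \<subseteq> {0..<n}"
  shows "edge_vec L x \<in> torus_vecs (length L)"
proof -
  have "(\<Prod>i\<in>L!k. x i) \<noteq> 0" if "k < length L" for k
  proof -
    have "L!k \<subseteq> {0..<n}" using L nth_mem[OF that] by blast
    then show ?thesis using x finite_subset[of "L!k" "{0..<n}"] by (auto simp: torus_vecs_def)
  qed
  then show ?thesis by (simp add: torus_vecs_def edge_vec_def)
qed

lemma edge_prods_proportional:
  assumes "edge_vec L y = (\<lambda>k. c * edge_vec L y' k)" "e \<in> set L"
  shows "(\<Prod>i\<in>e. y i) = c * (\<Prod>i\<in>e. y' i)"
proof -
  obtain k where "k < length L" "L!k = e" using assms(2) by (auto simp: in_set_conv_nth)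
  then show ?thesis using fun_cong[OF assms(1), of k] by (simp add: edge_vec_def)
qed

definition set_enum :: "nat set \<Rightarrow> nat \<Rightarrow> nat" where
  "set_enum S = (SOME h. bij_betw h {0..<card S} S)"

definition set_index :: "nat set \<Rightarrow> nat \<Rightarrow> nat" where
  "set_index S = inv_into {0..<card S} (set_enum S)"

lemma bij_betw_set_enum:
  assumes "finite S"
  shows "bij_betw (set_enum S) {0..<card S} S"
  using ex_bij_betw_nat_finite[OF assms] unfolding set_enum_def by (rule someI_ex)

lemma set_index_lt:
  assumes "finite S" "i \<in> S"
  shows "set_index S i < card S"
proof -
  have "i \<in> set_enum S ` {0..<card S}" using bij_betw_set_enum[OF assms(1)] assms(2)
    by (simp add: bij_betw_def)
  from inv_into_into[OF this] show ?thesis unfolding set_index_def by simp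
qed

lemma set_enum_set_index: "finite S \<Longrightarrow> i \<in> S \<Longrightarrow> set_enum S (set_index S i) = i"
  unfolding set_index_def by (rule bij_betw_inv_into_right[OF bij_betw_set_enum])

lemma set_enum_in: "finite S \<Longrightarrow> m < card S \<Longrightarrow> set_enum S m \<in> S"
  using bij_betw_apply[OF bij_betw_set_enum] by auto

lemma set_index_set_enum: "finite S \<Longrightarrow> m < card S \<Longrightarrow> set_index S (set_enum S m) = m"
  unfolding set_index_def using bij_betw_inv_into_left[OF bij_betw_set_enum] by auto

section \<open>Connected bipartite graphs\<close>

locale connected_bipartite =
  fixes n :: nat and E :: "nat set list" and A :: "nat set"
  assumes simple: "simple_graph n E" and connected: "graph_connected n E"
    and bipartite: "bipartition n E A"
    and A_nonempty: "A \<noteq> {}" and B_nonempty: "{0..<n} - A \<noteq> {}"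
begin

definition B :: "nat set" where "B = {0..<n} - A"

lemma A_subset: "A \<subseteq> {0..<n}"
  using bipartite by (simp add: bipartition_def)

lemma finite_A: "finite A"
  using A_subset finite_subset by blast

lemma finite_B: "finite B"
  by (simp add: B_def)

lemma card_A_pos: "card A \<ge> 1"
  using A_nonempty finite_A by (simp add: Suc_le_eq card_gt_0_iff)

lemma card_B_pos: "card B \<ge> 1"
  using B_nonempty finite_B by (simp add: Suc_le_eq card_gt_0_iff B_def)

lemma card_vertices: "n = card A + card B"
  using card_Diff_subset[OF finite_A A_subset] card_mono[OF _ A_subset] by (simp add: B_def)

lemma edge_ends:
  assumes "e \<in> set E"
  obtains i j where "e = {i,j}" "i \<in> A" "j \<in> B"
proof -
  obtain i j where ij: "e = {i,j}" "i \<noteq> j" "i < n" "j < n"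
    using simple assms unfolding simple_graph_def by blast
  have one: "card (e \<inter> A) = 1" using bipartite assms by (simp add: bipartition_def)
  have "(i \<in> A \<and> j \<notin> A) \<or> (j \<in> A \<and> i \<notin> A)"
  proof (rule ccontr)
    assume "\<not> ?thesis"
    then have "e \<inter> A = {i,j} \<or> e \<inter> A = {}" using ij(1) by auto
    then show False using one ij(2) by auto
  qed
  then show ?thesis using that ij by (auto simp: B_def insert_commute)
qed

lemma edge_subset: "e \<in> set E \<Longrightarrow> e \<subseteq> {0..<n}"
  using A_subset by (elim edge_ends) (auto simp: B_def)

lemma length_E_pos: "length E \<ge> 1"
proof -
  obtain i where "i \<in> A" using A_nonempty by blast
  moreover obtain j where "j \<in> B" using B_nonempty unfolding B_def by blast
  moreover have "reachable (set E) i j"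
    using connected calculation A_subset unfolding graph_connected_def B_def by auto
  ultimately have "\<exists>x y. {x,y} \<in> set E \<and> x \<in> A \<and> y \<notin> A"
    by (intro rtranclp_leaves_set) (auto simp: B_def)
  then obtain x y where "{x,y} \<in> set E" by blast
  then show ?thesis by (cases E) auto
qed

definition endA :: "nat \<Rightarrow> nat" where "endA k = (SOME i. i \<in> E!k \<and> i \<in> A)"
definition endB :: "nat \<Rightarrow> nat" where "endB k = (SOME j. j \<in> E!k \<and> j \<in> B)"

lemma edge_nth_ends:
  assumes "k < length E"
  shows "E!k = {endA k, endB k}" "endA k \<in> A" "endB k \<in> B"
proof -
  obtain i j where ij: "E!k = {i,j}" "i \<in> A" "j \<in> B"
    using edge_ends[OF nth_mem[OF assms]] by blast
  have "i \<notin> B" "j \<notin> A" using ij by (auto simp: B_def)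
  then have "endA k = i" "endB k = j"
    unfolding endA_def endB_def using ij by (auto intro!: some_equality)
  then show "E!k = {endA k, endB k}" "endA k \<in> A" "endB k \<in> B" using ij by auto
qed

text \<open>Coordinates of \<open>T\<^sup>a\<^sup>-\<^sup>1\<close> and \<open>T\<^sup>b\<^sup>-\<^sup>1\<close> are identified with the vertices of \<open>A\<close> and \<open>B\<close>
  via \<open>set_enum\<close>; \<open>glue u v\<close> is the vertex vector that is \<open>u\<close> on \<open>A\<close> and \<open>v\<close> on \<open>B\<close>.\<close>
definition glue :: "(nat \<Rightarrow> 'a::zero) \<Rightarrow> (nat \<Rightarrow> 'a) \<Rightarrow> nat \<Rightarrow> 'a" where
  "glue u v i = (if i \<in> A then u (set_index A i) else if i \<in> B then v (set_index B i) else 0)"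

lemma enum_A_lt: "m < card A \<Longrightarrow> set_enum A m < n"
  using set_enum_in[OF finite_A] A_subset by fastforce

lemma enum_B: "m < card B \<Longrightarrow> set_enum B m < n \<and> set_enum B m \<notin> A"
  using set_enum_in[OF finite_B] by (fastforce simp: B_def)

lemma glue_in_torus_vecs:
  assumes u: "u \<in> torus_vecs (card A)" and v: "v \<in> torus_vecs (card B)"
  shows "glue u v \<in> torus_vecs n"
proof -
  have "glue u v i \<noteq> 0" if "i < n" for i
  proof (cases "i \<in> A")
    case True
    then show ?thesis using u set_index_lt[OF finite_A True] by (simp add: glue_def torus_vecs_def)
  next
    case False
    then have "i \<in> B" using that by (simp add: B_def)
    then show ?thesis
      using v False set_index_lt[OF finite_B \<open>i \<in> B\<close>] by (simp add: glue_def torus_vecs_def)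
  qed
  moreover have "glue u v i = 0" if "i \<ge> n" for i
    using that A_subset by (auto simp: glue_def B_def)
  ultimately show ?thesis by (simp add: torus_vecs_def)
qed

lemma glue_surj:
  assumes x: "x \<in> torus_vecs n"
  obtains u v where "u \<in> torus_vecs (card A)" "v \<in> torus_vecs (card B)" "glue u v = x"
proof
  define u where "u m = (if m < card A then x (set_enum A m) else 0)" for m
  define v where "v m = (if m < card B then x (set_enum B m) else 0)" for m
  show "u \<in> torus_vecs (card A)"
    using x enum_A_lt by (simp add: torus_vecs_def u_def)
  show "v \<in> torus_vecs (card B)"
    using x enum_B by (simp add: torus_vecs_def v_def)
  show "glue u v = x"
  proof
    fix i
    consider "i \<in> A" | "i \<in> B" | "i \<ge> n" using A_subset by (force simp: B_def)
    then show "glue u v i = x i"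
    proof cases
      case 1
      then show ?thesis using set_index_lt[OF finite_A 1] set_enum_set_index[OF finite_A 1]
        by (simp add: glue_def u_def)
    next
      case 2
      then have "i \<notin> A" by (simp add: B_def)
      then show ?thesis using set_index_lt[OF finite_B 2] set_enum_set_index[OF finite_B 2] 2
        by (simp add: glue_def v_def)
    next
      case 3
      then show ?thesis using x A_subset by (auto simp: glue_def torus_vecs_def B_def)
    qed
  qed
qed

lemma glue_scaled_imp:
  assumes u: "u \<in> torus_vecs (card A)" "u0 \<in> torus_vecs (card A)"
    and v: "v \<in> torus_vecs (card B)" "v0 \<in> torus_vecs (card B)"
    and scaled: "\<forall>i<n. glue u v i = (if i \<in> A then l else m) * glue u0 v0 i"
  shows "u = (\<lambda>i. l * u0 i)" "v = (\<lambda>i. m * v0 i)"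
proof -
  have "u i = l * u0 i" for i
  proof (cases "i < card A")
    case True
    have "set_enum A i \<in> A" using set_enum_in[OF finite_A True] .
    then show ?thesis
      using scaled enum_A_lt[OF True] set_index_set_enum[OF finite_A True] by (auto simp: glue_def)
  qed (use u in \<open>simp add: torus_vecs_def\<close>)
  moreover have "v i = m * v0 i" for i
  proof (cases "i < card B")
    case True
    have "set_enum B i \<in> B" using set_enum_in[OF finite_B True] .
    then show ?thesis
      using scaled enum_B[OF True] set_index_set_enum[OF finite_B True] by (auto simp: glue_def)
  qed (use v in \<open>simp add: torus_vecs_def\<close>)
  ultimately show "u = (\<lambda>i. l * u0 i)" "v = (\<lambda>i. m * v0 i)" by auto
qed

lemma edge_vec_glue:
  assumes "k < length E"
  shows "edge_vec E (glue u v) k = u (set_index A (endA k)) * v (set_index B (endB k))"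
proof -
  have "endA k \<noteq> endB k" "endB k \<notin> A" using edge_nth_ends[OF assms] by (auto simp: B_def)
  then show ?thesis using edge_nth_ends[OF assms] assms by (simp add: edge_vec_def glue_def)
qed

text \<open>Along an edge the ratio \<open>r\<close> of two vertex vectors with proportional edge products
  satisfies \<open>r x r y = c\<close>; since every edge joins \<open>A\<close> to \<open>B\<close>, along any path \<open>r\<close> alternates
  between \<open>r w0\<close> and \<open>c / r w0\<close>.\<close>
lemma alternating_ratio:
  fixes r :: "nat \<Rightarrow> 'a::field"
  assumes F: "F \<subseteq> set E" and w0: "w0 \<in> A" and reach: "reachable F w0 v"
    and r: "\<And>x y. {x,y} \<in> F \<Longrightarrow> r x * r y = c" and c: "c \<noteq> 0" and l: "r w0 \<noteq> 0"
  shows "r v = (if v \<in> A then r w0 else c / r w0)"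
  using reach
proof (induction rule: rtranclp_induct)
  case base then show ?case using w0 by simp
next
  case (step x y)
  have rxy: "r x * r y = c" using r step(2) by blast
  obtain i j where ij: "{x,y} = {i,j}" "i \<in> A" "j \<in> B" using edge_ends step(2) F by blast
  have "j \<notin> A" using ij(3) by (simp add: B_def)
  then have "(x \<in> A \<and> y \<notin> A) \<or> (x \<notin> A \<and> y \<in> A)" using ij(1,2) by (auto simp: doubleton_eq_iff)
  then show ?case
  proof
    assume xy: "x \<in> A \<and> y \<notin> A"
    then have "r w0 * r y = c" using step(3) rxy by simp
    then have "r y = c / r w0" using l by (simp add: eq_divide_eq mult.commute)
    then show ?case using xy by simp
  next
    assume xy: "x \<notin> A \<and> y \<in> A"
    then have "c / r w0 * r y = c" using step(3) rxy by simp
    then have "r y = r w0" using l c by (simp add: field_simps)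
    then show ?case using xy by simp
  qed
qed

lemma proportional_edge_prods_imp_scaled:
  fixes x1 x2 :: "nat \<Rightarrow> 'a::field"
  assumes x: "x1 \<in> torus_vecs n" "x2 \<in> torus_vecs n" and F: "F \<subseteq> set E" and w0: "w0 \<in> A"
    and reach: "\<forall>v<n. reachable F w0 v" and c: "c \<noteq> 0"
    and prods: "\<And>e. e \<in> F \<Longrightarrow> (\<Prod>i\<in>e. x1 i) = c * (\<Prod>i\<in>e. x2 i)"
  obtains l where "l \<noteq> 0" "\<forall>i<n. x1 i = (if i \<in> A then l else c / l) * x2 i"
proof -
  define r where "r i = x1 i / x2 i" for i
  have nz: "x1 i \<noteq> 0" "x2 i \<noteq> 0" if "i < n" for i using x that by (auto simp: torus_vecs_def)
  have rr: "r x * r y = c" if "{x,y} \<in> F" for x y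
  proof -
    have e: "{x,y} \<in> set E" using that F by blast
    obtain i j where ij: "{x,y} = {i,j}" "i \<in> A" "j \<in> B" using edge_ends[OF e] by blast
    have "i \<noteq> j" "i < n" "j < n" using ij(2,3) A_subset by (auto simp: B_def)
    then have xy: "x \<noteq> y" "x < n" "y < n" using ij(1) by (auto simp: doubleton_eq_iff)
    then have "x1 x * x1 y = c * (x2 x * x2 y)" using prods[OF that] by simp
    then show ?thesis using nz xy by (simp add: r_def)
  qed
  have w0n: "w0 < n" using w0 A_subset by auto
  have r0: "r w0 \<noteq> 0" using nz[OF w0n] by (simp add: r_def)
  have "x1 i = (if i \<in> A then r w0 else c / r w0) * x2 i" if "i < n" for i
  proof -
    have "x1 i = r i * x2 i" using nz[OF that] by (simp add: r_def)
    then show ?thesis using alternating_ratio[of F w0 i r c, OF F w0 reach[rule_format, OF that] rr c r0] by simp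
  qed
  then show ?thesis using that r0 by blast
qed

lemma edge_vec_scaled:
  fixes x1 x2 :: "nat \<Rightarrow> 'a::field"
  assumes "l \<noteq> 0" "\<forall>i<n. x1 i = (if i \<in> A then l else c / l) * x2 i"
  shows "edge_vec E x1 = (\<lambda>k. c * edge_vec E x2 k)"
proof
  fix k
  show "edge_vec E x1 k = c * edge_vec E x2 k"
  proof (cases "k < length E")
    case True
    have ends: "endA k \<in> A" "endB k \<notin> A" "endB k < n" "endA k < n" "endA k \<noteq> endB k"
      using edge_nth_ends[OF True] A_subset by (auto simp: B_def)
    have "edge_vec E x1 k = (l * x2 (endA k)) * ((c / l) * x2 (endB k))"
      using True edge_nth_ends(1)[OF True] ends assms(2) by (simp add: edge_vec_def)
    also have "\<dots> = c * edge_vec E x2 k"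
      using True edge_nth_ends(1)[OF True] ends assms(1) by (simp add: edge_vec_def field_simps)
    finally show ?thesis .
  qed (simp add: edge_vec_def)
qed

lemma finite_edge_toric_set:
  "finite (UNIV::'a::field set) \<Longrightarrow> finite (edge_toric_set n E :: (nat \<Rightarrow> 'a) set set)"
  unfolding edge_toric_set_def using finite_torus_vecs by blast

lemma edge_toric_set_nonempty: "(edge_toric_set n E :: (nat \<Rightarrow> 'a::field) set set) \<noteq> {}"
proof -
  have "(\<lambda>i::nat. if i < n then (1::'a) else 0) \<in> torus_vecs n" by (simp add: torus_vecs_def)
  then show ?thesis unfolding edge_toric_set_def by blast
qed

lemma edge_vec_in_torus: "x \<in> torus_vecs n \<Longrightarrow> edge_vec E x \<in> torus_vecs (length E)"
  by (rule edge_vec_in_torus_vecs[OF _ edge_subset])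

lemma edge_vec_0_nonzero:
  assumes "x \<in> torus_vecs n"
  shows "edge_vec E x 0 \<noteq> 0"
  using edge_vec_in_torus[OF assms] length_E_pos unfolding torus_vecs_def by (simp add: Suc_le_eq)

lemma edge_toric_set_rep: "P \<in> edge_toric_set n E \<Longrightarrow> \<exists>y. P = proj_pt y \<and> y 0 \<noteq> 0"
  unfolding edge_toric_set_def using edge_vec_0_nonzero by blast

lemma edge_toric_set_weights_nonempty:
  "weights (length E) d (edge_toric_set n E :: (nat \<Rightarrow> 'a::field) set set) \<noteq> {}"
  by (rule weights_nonempty[OF length_E_pos edge_toric_set_nonempty edge_toric_set_rep])

lemma code_val_edge_pt_nonzero_iff:
  assumes "x \<in> torus_vecs n"
  shows "code_val (length E) d c (proj_pt (edge_vec E x)) \<noteq> 0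
     \<longleftrightarrow> eval_form (length E) d c (edge_vec E x) \<noteq> 0"
  by (rule code_val_proj_pt_nonzero_iff[of "edge_vec E x", OF edge_vec_0_nonzero[OF assms]])

section \<open>Fibres of the parametrization and the lower bound\<close>

definition fibre :: "(nat \<Rightarrow> 'a::field) set \<Rightarrow> ((nat \<Rightarrow> 'a) \<times> (nat \<Rightarrow> 'a)) set" where
  "fibre P = {(u, v). u \<in> torus_vecs (card A) \<and> v \<in> torus_vecs (card B)
                \<and> proj_pt (edge_vec E (glue u v)) = P}"

lemma reachable_from_A: "w0 \<in> A \<Longrightarrow> \<forall>v<n. reachable (set E) w0 v"
  using connected A_subset unfolding graph_connected_def by auto

text \<open>Connectedness makes the parametrization rigid: a fibre is an orbit of the action of
  \<open>K\<^sup>* \<times> K\<^sup>*\<close> scaling \<open>u\<close> and \<open>v\<close> separately.\<close>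
lemma fibre_subset_scalings:
  assumes "(u0, v0) \<in> fibre P"
  shows "fibre P \<subseteq> (\<lambda>(l, m). (\<lambda>i. l * u0 i, \<lambda>i. m * v0 i)) ` ({k. k \<noteq> 0} \<times> {k. k \<noteq> 0})"
proof
  fix p assume "p \<in> fibre P"
  then obtain u v where p: "p = (u, v)" "u \<in> torus_vecs (card A)" "v \<in> torus_vecs (card B)"
      "proj_pt (edge_vec E (glue u v)) = P"
    by (auto simp: fibre_def)
  have p0: "u0 \<in> torus_vecs (card A)" "v0 \<in> torus_vecs (card B)" "proj_pt (edge_vec E (glue u0 v0)) = P"
    using assms by (auto simp: fibre_def)
  obtain c where c: "c \<noteq> 0" "edge_vec E (glue u v) = (\<lambda>k. c * edge_vec E (glue u0 v0) k)"
    using proj_pt_eq_imp_scaled p(4) p0(3) by metis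
  obtain w0 where w0: "w0 \<in> A" using A_nonempty by blast
  obtain l where l: "l \<noteq> 0" "\<forall>i<n. glue u v i = (if i \<in> A then l else c / l) * glue u0 v0 i"
    using proportional_edge_prods_imp_scaled[OF glue_in_torus_vecs[OF p(2,3)] glue_in_torus_vecs[OF p0(1,2)]
        subset_refl w0 reachable_from_A[OF w0] c(1) edge_prods_proportional[OF c(2)]] .
  have "u = (\<lambda>i. l * u0 i)" "v = (\<lambda>i. c / l * v0 i)"
    by (rule glue_scaled_imp[OF p(2) p0(1) p(3) p0(2) l(2)])+
  then show "p \<in> (\<lambda>(l, m). (\<lambda>i. l * u0 i, \<lambda>i. m * v0 i)) ` ({k. k \<noteq> 0} \<times> {k. k \<noteq> 0})"
    using p(1) l(1) c(1) by (auto intro!: image_eqI[where x="(l, c / l)"])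
qed

lemma card_fibre_le:
  assumes fin: "finite (UNIV::'a::field set)"
  shows "card (fibre P :: ((nat \<Rightarrow> 'a) \<times> (nat \<Rightarrow> 'a)) set) \<le> card {k::'a. k \<noteq> 0} * card {k::'a. k \<noteq> 0}"
proof (cases "fibre P = {}")
  case False
  then obtain u0 v0 where "(u0, v0) \<in> fibre P" by auto
  let ?K = "{k::'a. k \<noteq> 0}"
  have "card (fibre P) \<le> card ((\<lambda>(l, m). (\<lambda>i. l * u0 i, \<lambda>i. m * v0 i)) ` (?K \<times> ?K))"
    using fin by (intro card_mono finite_imageI fibre_subset_scalings[OF \<open>(u0, v0) \<in> fibre P\<close>]) simp
  also have "\<dots> \<le> card (?K \<times> ?K)" by (rule card_image_le) (use fin in simp)
  finally show ?thesis by (simp add: card_cartesian_product)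
qed simp

lemma card_le_card_fibres:
  assumes fin: "finite (UNIV::'a::field set)" and S: "finite S"
    and T: "T \<subseteq> (\<Union>P\<in>S. fibre P :: ((nat \<Rightarrow> 'a) \<times> (nat \<Rightarrow> 'a)) set)"
  shows "card T \<le> card S * (card {k::'a. k \<noteq> 0} * card {k::'a. k \<noteq> 0})"
proof -
  have "finite (fibre P :: ((nat \<Rightarrow> 'a) \<times> (nat \<Rightarrow> 'a)) set)" for P
  proof (rule finite_subset)
    show "fibre P \<subseteq> torus_vecs (card A) \<times> torus_vecs (card B)" by (auto simp: fibre_def)
  qed (simp add: finite_torus_vecs[OF fin])
  then have "card T \<le> card (\<Union>P\<in>S. fibre P :: ((nat \<Rightarrow> 'a) \<times> (nat \<Rightarrow> 'a)) set)"
    using S T by (intro card_mono) auto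
  also have "\<dots> \<le> (\<Sum>P\<in>S. card (fibre P :: ((nat \<Rightarrow> 'a) \<times> (nat \<Rightarrow> 'a)) set))"
    by (rule card_UN_le[OF S])
  also have "\<dots> \<le> (\<Sum>P\<in>S. card {k::'a. k \<noteq> 0} * card {k::'a. k \<noteq> 0})"
    by (intro sum_mono card_fibre_le[OF fin])
  finally show ?thesis by simp
qed

definition glued_form :: "nat \<Rightarrow> ((nat \<Rightarrow> nat) \<Rightarrow> 'a::field) \<Rightarrow> (nat \<Rightarrow> 'a) \<Rightarrow> (nat \<Rightarrow> 'a) \<Rightarrow> 'a" where
  "glued_form d c u v = eval_form (length E) d c (edge_vec E (glue u v))"

lemma glued_form_eq:
  "glued_form d c u v = (\<Sum>\<alpha>\<in>mono_exps (length E) d. c \<alpha> *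
     ((\<Prod>k<length E. u (set_index A (endA k)) ^ \<alpha> k) * (\<Prod>k<length E. v (set_index B (endB k)) ^ \<alpha> k)))"
  unfolding glued_form_def eval_form_def
  by (intro sum.cong refl arg_cong2[where f="(*)"])
    (simp add: edge_vec_glue power_mult_distrib prod.distrib)

lemma set_index_endA_lt: "k < length E \<Longrightarrow> set_index A (endA k) < card A"
  using set_index_lt[OF finite_A] edge_nth_ends(2) by blast

lemma set_index_endB_lt: "k < length E \<Longrightarrow> set_index B (endB k) < card B"
  using set_index_lt[OF finite_B] edge_nth_ends(3) by blast

lemma glued_form_in_forms_left: "(\<lambda>u. glued_form d c u v) \<in> forms (card A) d"
proof -
  have "(\<lambda>u. glued_form d c u v) = (\<lambda>u. \<Sum>\<alpha>\<in>mono_exps (length E) d.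
      (c \<alpha> * (\<Prod>k<length E. v (set_index B (endB k)) ^ \<alpha> k)) * (\<Prod>k<length E. u (set_index A (endA k)) ^ \<alpha> k))"
    by (simp add: glued_form_eq mult_ac)
  also have "\<dots> \<in> forms (card A) d"
    by (intro sum_in_forms finite_mono_exps scale_in_forms monomial_reindex_in_forms set_index_endA_lt)
  finally show ?thesis .
qed

lemma glued_form_in_forms_right: "(\<lambda>v. glued_form d c u v) \<in> forms (card B) d"
proof -
  have "(\<lambda>v. glued_form d c u v) = (\<lambda>v. \<Sum>\<alpha>\<in>mono_exps (length E) d.
      (c \<alpha> * (\<Prod>k<length E. u (set_index A (endA k)) ^ \<alpha> k)) * (\<Prod>k<length E. v (set_index B (endB k)) ^ \<alpha> k))"
    by (simp add: glued_form_eq mult_ac)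
  also have "\<dots> \<in> forms (card B) d"
    by (intro sum_in_forms finite_mono_exps scale_in_forms monomial_reindex_in_forms set_index_endB_lt)
  finally show ?thesis .
qed

text \<open>Double counting: \<open>u\<close> runs through the support of the form \<open>u \<mapsto> G(u, v0)\<close>, and for each
  such \<open>u\<close> the form \<open>v \<mapsto> G(u, v)\<close> is nonzero at \<open>v0\<close>.\<close>
lemma card_glued_form_nonzero_ge:
  fixes c :: "(nat \<Rightarrow> nat) \<Rightarrow> 'a::field"
  assumes fin: "finite (UNIV::'a set)"
    and u0: "u0 \<in> torus_vecs (card A)" and v0: "v0 \<in> torus_vecs (card B)"
    and nz: "glued_form d c u0 v0 \<noteq> 0"
  shows "(card {k::'a. k \<noteq> 0} * min_dist (card A) d (proj_torus (card A) :: (nat \<Rightarrow> 'a) set set))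
       * (card {k::'a. k \<noteq> 0} * min_dist (card B) d (proj_torus (card B) :: (nat \<Rightarrow> 'a) set set))
     \<le> card {(u, v) \<in> torus_vecs (card A) \<times> torus_vecs (card B). glued_form d c u v \<noteq> 0}"
proof -
  let ?Q = "card {k::'a. k \<noteq> 0}"
  let ?DA = "min_dist (card A) d (proj_torus (card A) :: (nat \<Rightarrow> 'a) set set)"
  let ?DB = "min_dist (card B) d (proj_torus (card B) :: (nat \<Rightarrow> 'a) set set)"
  define U where "U = {u \<in> torus_vecs (card A). glued_form d c u v0 \<noteq> 0}"
  define V where "V u = {v \<in> torus_vecs (card B). glued_form d c u v \<noteq> 0}" for u
  have DA: "?Q * ?DA \<le> card U"
    unfolding U_def by (rule torus_weight_ge[OF fin card_A_pos glued_form_in_forms_left u0 nz])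
  have DB: "?Q * ?DB \<le> card (V u)" if "u \<in> U" for u
    using that unfolding U_def V_def
    by (intro torus_weight_ge[OF fin card_B_pos glued_form_in_forms_right v0]) auto
  have finU: "finite U" and finV: "finite (V u)" for u
    unfolding U_def V_def using finite_torus_vecs[OF fin] by auto
  have "(?Q * ?DA) * (?Q * ?DB) \<le> card U * (?Q * ?DB)" using DA by simp
  also have "\<dots> \<le> (\<Sum>u\<in>U. card (V u))" using sum_mono[of U "\<lambda>_. ?Q * ?DB" "\<lambda>u. card (V u)"] DB by simp
  also have "\<dots> = card (SIGMA u:U. V u)" using finU finV by (simp add: card_SigmaI)
  also have "\<dots> \<le> card {(u, v) \<in> torus_vecs (card A) \<times> torus_vecs (card B). glued_form d c u v \<noteq> 0}"
  proof (rule card_mono)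
    show "finite {(u, v) \<in> torus_vecs (card A) \<times> torus_vecs (card B). glued_form d c u v \<noteq> 0}"
      using finite_torus_vecs[OF fin] by (intro finite_subset[OF _ finite_cartesian_product]) auto
  qed (auto simp: U_def V_def)
  finally show ?thesis .
qed

lemma glued_form_support_subset_fibres:
  "{(u, v) \<in> torus_vecs (card A) \<times> torus_vecs (card B). glued_form d c u v \<noteq> 0}
     \<subseteq> (\<Union>P\<in>{P \<in> (edge_toric_set n E :: (nat \<Rightarrow> 'a::field) set set). code_val (length E) d c P \<noteq> 0}. fibre P)"
proof
  fix p assume "p \<in> {(u, v) \<in> torus_vecs (card A) \<times> torus_vecs (card B). glued_form d c u v \<noteq> 0}"
  then obtain u v where p: "p = (u, v)" "u \<in> torus_vecs (card A)" "v \<in> torus_vecs (card B)"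
      "glued_form d c u v \<noteq> 0"
    by auto
  have x: "glue u v \<in> torus_vecs n" by (rule glue_in_torus_vecs[OF p(2,3)])
  let ?P = "proj_pt (edge_vec E (glue u v)) :: (nat \<Rightarrow> 'a) set"
  have "?P \<in> edge_toric_set n E" unfolding edge_toric_set_def using x by blast
  moreover have "code_val (length E) d c ?P \<noteq> 0"
    using code_val_edge_pt_nonzero_iff[OF x] p(4) by (simp add: glued_form_def)
  moreover have "p \<in> fibre ?P" using p by (simp add: fibre_def)
  ultimately show "p \<in> (\<Union>P\<in>{P \<in> edge_toric_set n E. code_val (length E) d c P \<noteq> 0}. fibre P)" by blast
qed

lemma min_dist_product_le_weight:
  fixes c :: "(nat \<Rightarrow> nat) \<Rightarrow> 'a::field"
  assumes fin: "finite (UNIV::'a set)"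
    and P0: "P0 \<in> (edge_toric_set n E :: (nat \<Rightarrow> 'a) set set)" "code_val (length E) d c P0 \<noteq> 0"
  shows "min_dist (card A) d (proj_torus (card A) :: (nat \<Rightarrow> 'a) set set)
       * min_dist (card B) d (proj_torus (card B) :: (nat \<Rightarrow> 'a) set set)
       \<le> card {P \<in> (edge_toric_set n E :: (nat \<Rightarrow> 'a) set set). code_val (length E) d c P \<noteq> 0}"
proof -
  let ?Q = "card {k::'a. k \<noteq> 0}"
  let ?DA = "min_dist (card A) d (proj_torus (card A) :: (nat \<Rightarrow> 'a) set set)"
  let ?DB = "min_dist (card B) d (proj_torus (card B) :: (nat \<Rightarrow> 'a) set set)"
  let ?S = "{P \<in> (edge_toric_set n E :: (nat \<Rightarrow> 'a) set set). code_val (length E) d c P \<noteq> 0}"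
  obtain x0 where x0: "x0 \<in> torus_vecs n" "P0 = proj_pt (edge_vec E x0)"
    using P0(1) unfolding edge_toric_set_def by blast
  obtain u0 v0 where uv0: "u0 \<in> torus_vecs (card A)" "v0 \<in> torus_vecs (card B)" "glue u0 v0 = x0"
    by (rule glue_surj[OF x0(1)])
  have "glued_form d c u0 v0 \<noteq> 0"
    using P0(2) code_val_edge_pt_nonzero_iff[OF x0(1)] x0(2) uv0(3) by (simp add: glued_form_def)
  then have "(?Q * ?DA) * (?Q * ?DB)
      \<le> card {(u, v) \<in> torus_vecs (card A) \<times> torus_vecs (card B). glued_form d c u v \<noteq> 0}"
    by (rule card_glued_form_nonzero_ge[OF fin uv0(1,2)])
  also have "\<dots> \<le> card ?S * (?Q * ?Q)"
    using finite_edge_toric_set[OF fin]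
    by (intro card_le_card_fibres[OF fin] glued_form_support_subset_fibres) simp
  finally have "(?Q * ?Q) * (?DA * ?DB) \<le> (?Q * ?Q) * card ?S" by (simp add: mult_ac)
  then show ?thesis using card_nonzero_pos[OF fin] by simp
qed

lemma min_dist_product_le:
  assumes fin: "finite (UNIV::'a::field set)"
  shows "min_dist (card A) d (proj_torus (card A) :: (nat \<Rightarrow> 'a) set set)
       * min_dist (card B) d (proj_torus (card B) :: (nat \<Rightarrow> 'a) set set)
       \<le> min_dist (length E) d (edge_toric_set n E :: (nat \<Rightarrow> 'a) set set)"
  using min_dist_product_le_weight[OF fin]
  by (intro min_dist_ge[OF finite_edge_toric_set[OF fin] edge_toric_set_weights_nonempty]) blast

text \<open>Every fibre has at most \<open>(q-1)\<^sup>2\<close> points, while the pairs \<open>(u, v)\<close> number \<open>(q-1)\<^sup>n\<close>.\<close>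
lemma card_proj_torus_le_card_edge_toric_set:
  assumes fin: "finite (UNIV::'a::field set)"
  shows "card (proj_torus (n - 1) :: (nat \<Rightarrow> 'a) set set) \<le> card (edge_toric_set n E :: (nat \<Rightarrow> 'a) set set)"
proof -
  let ?Q = "card {k::'a. k \<noteq> 0}"
  let ?X = "edge_toric_set n E :: (nat \<Rightarrow> 'a) set set"
  have n1: "n - 1 \<ge> 1" and n: "n = Suc (n - 1)" using card_vertices card_A_pos card_B_pos by auto
  have cover: "torus_vecs (card A) \<times> torus_vecs (card B) \<subseteq> (\<Union>P\<in>?X. fibre P)"
  proof
    fix p assume "p \<in> (torus_vecs (card A) \<times> torus_vecs (card B) :: ((nat \<Rightarrow> 'a) \<times> (nat \<Rightarrow> 'a)) set)"
    then obtain u v where p: "p = (u, v)" "u \<in> torus_vecs (card A)" "v \<in> torus_vecs (card B)" by blast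
    then have "proj_pt (edge_vec E (glue u v)) \<in> ?X"
      unfolding edge_toric_set_def using glue_in_torus_vecs by blast
    moreover have "p \<in> fibre (proj_pt (edge_vec E (glue u v)))" using p by (simp add: fibre_def)
    ultimately show "p \<in> (\<Union>P\<in>?X. fibre P)" by blast
  qed
  have "(card (proj_torus (n - 1) :: (nat \<Rightarrow> 'a) set set) * ?Q) * ?Q = ?Q ^ (n - 1) * ?Q"
    using card_proj_torus[OF fin n1] by (simp add: mult.commute)
  also have "\<dots> = ?Q ^ n" by (metis n power_Suc2)
  also have "\<dots> = card (torus_vecs (card A) \<times> torus_vecs (card B) :: ((nat \<Rightarrow> 'a) \<times> (nat \<Rightarrow> 'a)) set)"
    by (simp add: card_cartesian_product card_torus_vecs[OF fin] power_add[symmetric] card_vertices[symmetric])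
  also have "\<dots> \<le> card ?X * (?Q * ?Q)"
    by (rule card_le_card_fibres[OF fin finite_edge_toric_set[OF fin] cover])
  finally show ?thesis using card_nonzero_pos[OF fin] by (simp add: mult.assoc)
qed

end

section \<open>The upper bound\<close>

locale bipartite_spanning_tree = connected_bipartite +
  fixes T :: "nat set list" and root :: nat
  assumes tree_edges: "set T \<subseteq> set E" and length_T: "length T = n - 1"
    and root_in_A: "root \<in> A" and tree_spanning: "\<forall>v<n. reachable (set T) root v"
begin

definition tree_pos :: "nat \<Rightarrow> nat" where
  "tree_pos j = (SOME k. k < length E \<and> E!k = T!j)"

lemma tree_pos:
  assumes "j < length T"
  shows "tree_pos j < length E" "E!(tree_pos j) = T!j"
proof -
  have "T!j \<in> set E" using tree_edges nth_mem[OF assms] by blast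
  then have "\<exists>k. k < length E \<and> E!k = T!j" by (simp add: in_set_conv_nth)
  from someI_ex[OF this] show "tree_pos j < length E" "E!(tree_pos j) = T!j"
    unfolding tree_pos_def by auto
qed

definition restrict_tree :: "(nat \<Rightarrow> 'a::zero) \<Rightarrow> nat \<Rightarrow> 'a" where
  "restrict_tree y j = (if j < length T then y (tree_pos j) else 0)"

lemma restrict_tree_edge_vec: "restrict_tree (edge_vec E x) = edge_vec T x"
  by (rule ext) (simp add: restrict_tree_def edge_vec_def tree_pos)

lemma restrict_tree_scale:
  fixes y :: "nat \<Rightarrow> 'a::field"
  shows "restrict_tree (\<lambda>i. k * y i) = (\<lambda>j. k * restrict_tree y j)"
  by (rule ext) (simp add: restrict_tree_def)

definition tree_proj :: "(nat \<Rightarrow> 'a::field) set \<Rightarrow> (nat \<Rightarrow> 'a) set" where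
  "tree_proj P = proj_pt (restrict_tree (SOME y. y \<in> P))"

lemma tree_proj_edge_pt: "tree_proj (proj_pt (edge_vec E x)) = proj_pt (edge_vec T x)"
proof -
  have "(SOME y. y \<in> proj_pt (edge_vec E x)) \<in> proj_pt (edge_vec E x)"
    by (rule someI[of "\<lambda>y. y \<in> proj_pt (edge_vec E x)", OF proj_pt_self])
  then obtain k where k: "k \<noteq> 0" "(SOME y. y \<in> proj_pt (edge_vec E x)) = (\<lambda>i. k * edge_vec E x i)"
    unfolding proj_pt_iff by blast
  show ?thesis
    unfolding tree_proj_def k(2) restrict_tree_scale restrict_tree_edge_vec by (rule proj_pt_scale[OF k(1)])
qed

lemma edge_vec_tree_in_torus: "x \<in> torus_vecs n \<Longrightarrow> edge_vec T x \<in> torus_vecs (n - 1)"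
  using edge_vec_in_torus_vecs[of x n T] edge_subset tree_edges length_T by auto

lemma tree_proj_into: "tree_proj ` (edge_toric_set n E :: (nat \<Rightarrow> 'a::field) set set) \<subseteq> proj_torus (n - 1)"
proof
  fix Q :: "(nat \<Rightarrow> 'a) set"
  assume "Q \<in> tree_proj ` edge_toric_set n E"
  then obtain x where x: "x \<in> torus_vecs n" "Q = proj_pt (edge_vec T x)"
    by (auto simp: edge_toric_set_def tree_proj_edge_pt)
  then show "Q \<in> proj_torus (n - 1)"
    using edge_vec_tree_in_torus[OF x(1)] unfolding proj_torus_def by blast
qed

text \<open>Edge products on a spanning tree determine a point of \<open>X\<close>, by the rigidity lemma.\<close>
lemma inj_on_tree_proj: "inj_on tree_proj (edge_toric_set n E :: (nat \<Rightarrow> 'a::field) set set)"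
proof (rule inj_onI)
  fix P1 P2 :: "(nat \<Rightarrow> 'a) set"
  assume "P1 \<in> edge_toric_set n E" "P2 \<in> edge_toric_set n E" and eq: "tree_proj P1 = tree_proj P2"
  then obtain x1 x2 where x: "x1 \<in> torus_vecs n" "P1 = proj_pt (edge_vec E x1)"
      "x2 \<in> torus_vecs n" "P2 = proj_pt (edge_vec E x2)"
    unfolding edge_toric_set_def by blast
  have "proj_pt (edge_vec T x1) = proj_pt (edge_vec T x2)" using eq x by (simp add: tree_proj_edge_pt)
  then obtain c where c: "c \<noteq> 0" "edge_vec T x1 = (\<lambda>k. c * edge_vec T x2 k)"
    using proj_pt_eq_imp_scaled by blast
  obtain l where "l \<noteq> 0" "\<forall>i<n. x1 i = (if i \<in> A then l else c / l) * x2 i"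
    using proportional_edge_prods_imp_scaled[OF x(1) x(3) tree_edges root_in_A tree_spanning c(1)
        edge_prods_proportional[OF c(2)]] .
  then have "edge_vec E x1 = (\<lambda>k. c * edge_vec E x2 k)" by (rule edge_vec_scaled)
  then show "P1 = P2" using x proj_pt_scale[OF c(1)] by simp
qed

lemma bij_betw_tree_proj:
  assumes fin: "finite (UNIV::'a::field set)"
  shows "bij_betw tree_proj (edge_toric_set n E :: (nat \<Rightarrow> 'a) set set) (proj_torus (n - 1))"
proof -
  let ?X = "edge_toric_set n E :: (nat \<Rightarrow> 'a) set set"
  let ?X3 = "proj_torus (n - 1) :: (nat \<Rightarrow> 'a) set set"
  have inj: "inj_on tree_proj ?X" by (rule inj_on_tree_proj)
  have into: "tree_proj ` ?X \<subseteq> ?X3" by (rule tree_proj_into)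
  have "card ?X3 \<le> card (tree_proj ` ?X)"
    using card_proj_torus_le_card_edge_toric_set[OF fin] card_image[OF inj] by simp
  then have "tree_proj ` ?X = ?X3"
    using card_mono[OF finite_proj_torus[OF fin] into] by (intro card_subset_eq[OF finite_proj_torus[OF fin] into]) simp
  then show ?thesis using inj by (simp add: bij_betw_def)
qed

lemma tree_code_pullback:
  "\<exists>c. \<forall>P\<in>(edge_toric_set n E :: (nat \<Rightarrow> 'a::field) set set).
     code_val (length E) d c P \<noteq> 0 \<longleftrightarrow> code_val (n - 1) d c' (tree_proj P) \<noteq> 0"
proof -
  have "(\<lambda>w. eval_form (n - 1) d c' (restrict_tree w)) = (\<lambda>w. eval_form (n - 1) d c' (\<lambda>j. w (tree_pos j)))"
    using length_T by (intro ext eval_form_cong) (simp add: restrict_tree_def)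
  also have "\<dots> \<in> forms (length E) d"
    using length_T by (intro eval_form_reindex_in_forms) (simp add: tree_pos)
  finally obtain c where c: "\<And>w. eval_form (n - 1) d c' (restrict_tree w) = eval_form (length E) d c w"
    unfolding forms_def by blast
  have "code_val (length E) d c P \<noteq> 0 \<longleftrightarrow> code_val (n - 1) d c' (tree_proj P) \<noteq> 0"
    if P: "P \<in> edge_toric_set n E" for P :: "(nat \<Rightarrow> 'a) set"
  proof -
    obtain x where x: "x \<in> torus_vecs n" "P = proj_pt (edge_vec E x)"
      using P unfolding edge_toric_set_def by blast
    have "edge_vec T x 0 \<noteq> 0"
      using edge_vec_tree_in_torus[OF x(1)] card_vertices card_A_pos card_B_pos by (simp add: torus_vecs_def)
    then show ?thesis
      using code_val_edge_pt_nonzero_iff[OF x(1)] code_val_proj_pt_nonzero_iff[of "edge_vec T x"] c[of "edge_vec E x"]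
      by (simp add: x(2) tree_proj_edge_pt restrict_tree_edge_vec)
  qed
  then show ?thesis by blast
qed

lemma min_dist_le_via_tree:
  assumes fin: "finite (UNIV::'a::field set)"
  shows "min_dist (length E) d (edge_toric_set n E :: (nat \<Rightarrow> 'a) set set)
       \<le> min_dist (n - 1) d (proj_torus (n - 1) :: (nat \<Rightarrow> 'a) set set)"
proof (rule min_dist_le_of_bij[OF finite_proj_torus[OF fin] bij_betw_tree_proj[OF fin]])
  show "weights (n - 1) d (proj_torus (n - 1) :: (nat \<Rightarrow> 'a) set set) \<noteq> {}"
    using card_vertices card_A_pos card_B_pos by (intro proj_torus_weights_nonempty) simp
qed (rule tree_code_pullback)

end

context connected_bipartite
begin

lemma min_dist_le_proj_torus:
  assumes fin: "finite (UNIV::'a::field set)"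
  shows "min_dist (length E) d (edge_toric_set n E :: (nat \<Rightarrow> 'a) set set)
       \<le> min_dist (n - 1) d (proj_torus (n - 1) :: (nat \<Rightarrow> 'a) set set)"
proof -
  obtain w0 where w0: "w0 \<in> A" using A_nonempty by blast
  then have "w0 < n" using A_subset by auto
  then obtain F where F: "F \<subseteq> set E" "card F = n - 1" "\<forall>v<n. reachable F w0 v"
    by (rule connected_spanning_edges[OF simple connected])
  obtain T where T: "set T = F" "distinct T"
    using finite_distinct_list[OF finite_subset[OF F(1) finite_set]] by blast
  have "length T = n - 1" using distinct_card[OF T(2)] T(1) F(2) by simp
  then interpret bipartite_spanning_tree n E A T w0
    using F(1,3) T(1) w0
    by (intro bipartite_spanning_tree.intro connected_bipartite_axioms) (simp add: bipartite_spanning_tree_axioms_def)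
  show ?thesis by (rule min_dist_le_via_tree[OF fin])
qed

end

theorem theorem4p4:
  fixes n a b d :: nat and E :: "nat set list" and A :: "nat set"
  assumes "finite (UNIV :: 'a::field set)"
    and "simple_graph n E" and "graph_connected n E"
    and "bipartition n E A" and "card A = a" and "card ({0..<n} - A) = b"
    and "a \<ge> 1" and "b \<ge> 1" and "d \<ge> 1"
  shows "min_dist a d (proj_torus a :: (nat \<Rightarrow> 'a) set set)
           * min_dist b d (proj_torus b :: (nat \<Rightarrow> 'a) set set)
         \<le> min_dist (length E) d (edge_toric_set n E :: (nat \<Rightarrow> 'a) set set)
       \<and> min_dist (length E) d (edge_toric_set n E :: (nat \<Rightarrow> 'a) set set)
         \<le> min_dist (a + b - 1) d (proj_torus (a + b - 1) :: (nat \<Rightarrow> 'a) set set)"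
proof -
  have "A \<noteq> {}" "{0..<n} - A \<noteq> {}" using assms(5-8) by (metis card.empty not_one_le_zero)+
  with assms(2-4) interpret connected_bipartite n E A by unfold_locales
  have "card B = b" using assms(6) by (simp add: B_def)
  moreover have "n - 1 = a + b - 1" using calculation assms(5) card_vertices by simp
  ultimately show ?thesis
    using min_dist_product_le[OF assms(1), of d] min_dist_le_proj_torus[OF assms(1), of d] assms(5) by simp
qed

end
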